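(* For each $n\geq1$, $x-1$ divides $H_{1,n}(x,y)$ and $(x-1)^2$ divides $H_{0,n}(x,y)$ in $\mathbb{Z}[x,y]$.
   Context: Graphs are finite. For a graph $G$, a spanning subgraph $A$ has vertex set $V(G)$ and edge set $E(A)\subseteq E(G)$; $k(A)$ is its number of components, $r(A)=|V(G)|-k(A)$, $n(A)=|E(A)|-r(A)$; the weight of $A$ is $(x-1)^{r(G)-r(A)}(y-1)^{n(A)}$. The graphs $\Sigma_n$ ($n\ge1$; Schreier graphs of the Hanoi Towers group $H^{(3)}$ with loops removed) each have three outmost vertices top, left, right: $\Sigma_1$ is the triangle $K_3$; $\Sigma_{n+1}$ is the disjoint union of three copies $G_1,G_2,G_3$ of $\Sigma_n$ together with three new edges joining left$(G_1)$ to top$(G_2)$, right$(G_1)$ to top$(G_3)$, and right$(G_2)$ to left$(G_3)$; its outmost vertices are top$(G_1)$, left$(G_2)$, right$(G_3)$. $H_{1,n}$ is the sum of the weights (with $G=\Sigma_n$) of the spanning subgraphs of $\Sigma_n$ in which the left and right outmost vertices lie in one component and the top one in another; $H_{0,n}$ is the sum over spanning subgraphs in which the three outmost vertices lie in three distinct components. *)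

theory Defs
  imports "HOL-Computational_Algebra.Polynomial"
begin

text \<open>Vertices of Sigma_n are words of length n over {0,1,2}; the i-th copy G_(i+1)
  of Sigma_n inside Sigma_(n+1) consists of the words starting with i.\<close>

fun sig_verts :: "nat \<Rightarrow> nat list set" where
  "sig_verts 0 = {}"
| "sig_verts (Suc 0) = {[0], [1], [2]}"
| "sig_verts (Suc (Suc n)) = (\<Union>i\<in>{0,1,2}. Cons i ` sig_verts (Suc n))"

fun sig_top :: "nat \<Rightarrow> nat list" where
  "sig_top 0 = []"
| "sig_top (Suc 0) = [0]"
| "sig_top (Suc (Suc n)) = 0 # sig_top (Suc n)"

fun sig_left :: "nat \<Rightarrow> nat list" where
  "sig_left 0 = []"
| "sig_left (Suc 0) = [1]"
| "sig_left (Suc (Suc n)) = 1 # sig_left (Suc n)"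

fun sig_right :: "nat \<Rightarrow> nat list" where
  "sig_right 0 = []"
| "sig_right (Suc 0) = [2]"
| "sig_right (Suc (Suc n)) = 2 # sig_right (Suc n)"

fun sig_edges :: "nat \<Rightarrow> nat list set set" where
  "sig_edges 0 = {}"
| "sig_edges (Suc 0) = {{[0],[1]}, {[0],[2]}, {[1],[2]}}"
| "sig_edges (Suc (Suc n)) =
     (\<Union>i\<in>{0,1,2}. (\<lambda>e. Cons i ` e) ` sig_edges (Suc n))
     \<union> {{0 # sig_left (Suc n), 1 # sig_top (Suc n)},
        {0 # sig_right (Suc n), 2 # sig_top (Suc n)},
        {1 # sig_right (Suc n), 2 # sig_left (Suc n)}}"

definition adj :: "'a set set \<Rightarrow> ('a \<times> 'a) set" where
  "adj A = {(u, v). {u, v} \<in> A}"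

definition same_comp :: "'a set set \<Rightarrow> 'a \<Rightarrow> 'a \<Rightarrow> bool" where
  "same_comp A u v \<longleftrightarrow> (u, v) \<in> (adj A)\<^sup>*"

definition ncomp :: "'a set \<Rightarrow> 'a set set \<Rightarrow> nat" where
  "ncomp V A = card (V // (adj A)\<^sup>*)"

definition rank :: "'a set \<Rightarrow> 'a set set \<Rightarrow> nat" where
  "rank V A = card V - ncomp V A"

definition nullity :: "'a set \<Rightarrow> 'a set set \<Rightarrow> nat" where
  "nullity V A = card A - rank V A"

text \<open>Z[x,y] is represented as int poly poly: polynomials in x with coefficients in Z[y].\<close>
definition X :: "int poly poly" where "X = [:0, 1:]"
definition Y :: "int poly poly" where "Y = [:[:0, 1:]:]"

definition weight :: "'a set \<Rightarrow> 'a set set \<Rightarrow> 'a set set \<Rightarrow> int poly poly" where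
  "weight V E A = (X - 1) ^ (rank V E - rank V A) * (Y - 1) ^ nullity V A"

definition H1 :: "nat \<Rightarrow> int poly poly" where
  "H1 n = (\<Sum>A\<in>{A. A \<subseteq> sig_edges n \<and>
              same_comp A (sig_left n) (sig_right n) \<and>
              \<not> same_comp A (sig_top n) (sig_left n)}.
            weight (sig_verts n) (sig_edges n) A)"

definition H0 :: "nat \<Rightarrow> int poly poly" where
  "H0 n = (\<Sum>A\<in>{A. A \<subseteq> sig_edges n \<and>
              \<not> same_comp A (sig_left n) (sig_right n) \<and>
              \<not> same_comp A (sig_top n) (sig_left n) \<and>
              \<not> same_comp A (sig_top n) (sig_right n)}.
            weight (sig_verts n) (sig_edges n) A)"

end

theory Submission
  imports Defs
begin

text \<open>Since \<open>\<Sigma>\<^sub>n\<close> is connected, the weight of a spanning subgraph \<open>A\<close> carries the factor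
  \<open>(x - 1)\<^bsup>k(A) - 1\<^esup>\<close>. A subgraph separating the top outmost vertex from the other two
  has at least two components, and one separating all three outmost vertices has at
  least three, so every summand of \<open>H\<^sub>1\<^sub>,\<^sub>n\<close> is divisible by \<open>x - 1\<close> and every summand of
  \<open>H\<^sub>0\<^sub>,\<^sub>n\<close> by \<open>(x - 1)\<^sup>2\<close>.\<close>

lemma sym_adj: "sym (adj A)"
  unfolding adj_def sym_def by (simp add: insert_commute)

lemma same_comp_refl: "same_comp A u u"
  unfolding same_comp_def by simp

lemma same_comp_sym: "same_comp A u v \<Longrightarrow> same_comp A v u"
  unfolding same_comp_def by (rule symD[OF sym_rtrancl[OF sym_adj]])

lemma same_comp_trans: "same_comp A u v \<Longrightarrow> same_comp A v w \<Longrightarrow> same_comp A u w"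
  unfolding same_comp_def by (rule rtrancl_trans)

lemma same_comp_edge: "{u, v} \<in> A \<Longrightarrow> same_comp A u v"
  unfolding same_comp_def adj_def by (rule r_into_rtrancl) simp

lemma same_comp_mono:
  assumes "A \<subseteq> B" "same_comp A u v"
  shows "same_comp B u v"
proof -
  from assms(1) have "adj A \<subseteq> adj B" unfolding adj_def by auto
  with assms(2) show ?thesis unfolding same_comp_def using rtrancl_mono by blast
qed

lemma same_comp_image_Cons:
  assumes "same_comp E u v"
  shows "same_comp ((\<lambda>e. Cons i ` e) ` E) (i # u) (i # v)"
  using assms unfolding same_comp_def
proof (induction rule: rtrancl_induct)
  case (step v w)
  then have "Cons i ` {v, w} \<in> (\<lambda>e. Cons i ` e) ` E"
    unfolding adj_def by blast
  then have "(i # v, i # w) \<in> adj ((\<lambda>e. Cons i ` e) ` E)"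
    unfolding adj_def by simp
  with step.IH show ?case by (rule rtrancl_into_rtrancl)
qed simp

lemma quotient_eq_image: "V // R = (\<lambda>v. R `` {v}) ` V"
  unfolding quotient_def by blast

lemma ncomp_le_card: "finite V \<Longrightarrow> ncomp V A \<le> card V"
  unfolding ncomp_def quotient_eq_image by (rule card_image_le)

lemma ncomp_eq_1:
  assumes "r \<in> V" and "\<And>v. v \<in> V \<Longrightarrow> same_comp A r v"
  shows "ncomp V A = 1"
proof -
  have "(adj A)\<^sup>* `` {v} = (adj A)\<^sup>* `` {r}" if "v \<in> V" for v
    using assms(2)[OF that] same_comp_sym[OF assms(2)[OF that]]
    unfolding same_comp_def by (blast intro: rtrancl_trans)
  then have "V // (adj A)\<^sup>* = {(adj A)\<^sup>* `` {r}}"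
    using assms(1) unfolding quotient_eq_image by blast
  then show ?thesis unfolding ncomp_def by simp
qed

lemma card_le_ncomp:
  assumes "finite V" "S \<subseteq> V"
    and separated: "\<And>u v. u \<in> S \<Longrightarrow> v \<in> S \<Longrightarrow> u \<noteq> v \<Longrightarrow> \<not> same_comp A u v"
  shows "card S \<le> ncomp V A"
proof -
  let ?cls = "\<lambda>v. (adj A)\<^sup>* `` {v}"
  have "inj_on ?cls S"
  proof (rule inj_onI)
    fix u v assume "u \<in> S" "v \<in> S" "?cls u = ?cls v"
    then show "u = v"
      using separated[of u v] unfolding same_comp_def by (metis Image_singleton_iff rtrancl_refl)
  qed
  then have "card S = card (?cls ` S)"
    by (rule card_image[symmetric])
  also have "\<dots> \<le> card (V // (adj A)\<^sup>*)"
    using assms(1,2) unfolding quotient_eq_image by (intro card_mono) auto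
  finally show ?thesis
    unfolding ncomp_def .
qed

lemma power_dvd_weight_of_connected:
  assumes "finite V" "ncomp V E = 1" "k + 1 \<le> ncomp V A"
  shows "(X - 1) ^ k dvd weight V E A"
proof -
  have "rank V E - rank V A = ncomp V A - 1"
    using assms(2) ncomp_le_card[OF assms(1), of A] unfolding rank_def by simp
  with assms(3) show ?thesis
    unfolding weight_def by (simp add: le_imp_power_dvd)
qed

lemma finite_sig_verts: "finite (sig_verts n)"
  by (induction n rule: sig_verts.induct) auto

lemma outmost_in_sig_verts:
  assumes "n \<ge> 1"
  shows "sig_top n \<in> sig_verts n" "sig_left n \<in> sig_verts n" "sig_right n \<in> sig_verts n"
proof -
  obtain m where "n = Suc m" using assms by (cases n) auto
  moreover have "sig_top (Suc m) \<in> sig_verts (Suc m)" "sig_left (Suc m) \<in> sig_verts (Suc m)"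
    "sig_right (Suc m) \<in> sig_verts (Suc m)" by (induction m) auto
  ultimately show "sig_top n \<in> sig_verts n" "sig_left n \<in> sig_verts n" "sig_right n \<in> sig_verts n"
    by simp_all
qed

lemma sig_connected: "n \<ge> 1 \<Longrightarrow> v \<in> sig_verts n \<Longrightarrow> same_comp (sig_edges n) (sig_top n) v"
proof (induction n arbitrary: v rule: sig_verts.induct)
  case 2
  then show ?case by (auto intro: same_comp_edge same_comp_refl)
next
  case (3 m)
  let ?E = "sig_edges (Suc (Suc m))"
  have in_copy: "same_comp ?E (i # sig_top (Suc m)) (i # w)"
    if "i \<in> {0, 1, 2}" "w \<in> sig_verts (Suc m)" for i w
  proof -
    have "same_comp (sig_edges (Suc m)) (sig_top (Suc m)) w"
      using "3.IH"[of 0] that(2) by simp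
    then have "same_comp ((\<lambda>e. Cons i ` e) ` sig_edges (Suc m)) (i # sig_top (Suc m)) (i # w)"
      by (rule same_comp_image_Cons)
    moreover have "(\<lambda>e. Cons i ` e) ` sig_edges (Suc m) \<subseteq> ?E"
      using that(1) by auto
    ultimately show ?thesis by (metis same_comp_mono)
  qed
  have copy_tops: "same_comp ?E (0 # sig_top (Suc m)) (i # sig_top (Suc m))"
    if "i \<in> {0, 1, 2}" for i
  proof -
    have "same_comp ?E (0 # sig_top (Suc m)) (1 # sig_top (Suc m))"
      using in_copy[of 0 "sig_left (Suc m)"] outmost_in_sig_verts[of "Suc m"]
      by (auto intro: same_comp_trans same_comp_edge)
    moreover have "same_comp ?E (0 # sig_top (Suc m)) (2 # sig_top (Suc m))"
      using in_copy[of 0 "sig_right (Suc m)"] outmost_in_sig_verts[of "Suc m"]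
      by (auto intro: same_comp_trans same_comp_edge)
    ultimately show ?thesis using that by (auto intro: same_comp_refl)
  qed
  from "3.prems"(2) obtain i w where "i \<in> {0, 1, 2}" "w \<in> sig_verts (Suc m)" "v = i # w"
    by auto
  then show ?case
    using copy_tops in_copy by (auto intro: same_comp_trans)
qed simp

lemma ncomp_sig_edges: "n \<ge> 1 \<Longrightarrow> ncomp (sig_verts n) (sig_edges n) = 1"
  by (rule ncomp_eq_1[OF outmost_in_sig_verts(1) sig_connected])

theorem lemma4p5:
  fixes n :: nat
  assumes "n \<ge> 1"
  shows "(X - 1) dvd H1 n \<and> (X - 1)\<^sup>2 dvd H0 n"
proof
  note dvd_weight = power_dvd_weight_of_connected[OF finite_sig_verts ncomp_sig_edges[OF assms]]
  note card_le = card_le_ncomp[OF finite_sig_verts]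
  note outmost = outmost_in_sig_verts[OF assms]
  show "(X - 1) dvd H1 n"
    unfolding H1_def
  proof (rule dvd_sum)
    fix A assume "A \<in> {A. A \<subseteq> sig_edges n \<and> same_comp A (sig_left n) (sig_right n) \<and>
                        \<not> same_comp A (sig_top n) (sig_left n)}"
    then have sep: "\<not> same_comp A (sig_top n) (sig_left n)" by simp
    then have "sig_top n \<noteq> sig_left n" by (metis same_comp_refl)
    then have "1 + 1 = card {sig_top n, sig_left n}" by simp
    also have "\<dots> \<le> ncomp (sig_verts n) A"
      using sep outmost by (intro card_le) (auto dest: same_comp_sym)
    finally show "(X - 1) dvd weight (sig_verts n) (sig_edges n) A"
      using dvd_weight[of 1 A] by simp
  qed
  show "(X - 1)\<^sup>2 dvd H0 n"
    unfolding H0_def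
  proof (rule dvd_sum)
    fix A assume "A \<in> {A. A \<subseteq> sig_edges n \<and> \<not> same_comp A (sig_left n) (sig_right n) \<and>
                        \<not> same_comp A (sig_top n) (sig_left n) \<and>
                        \<not> same_comp A (sig_top n) (sig_right n)}"
    then have sep: "\<not> same_comp A (sig_top n) (sig_left n)" "\<not> same_comp A (sig_top n) (sig_right n)"
      "\<not> same_comp A (sig_left n) (sig_right n)" by simp_all
    then have "sig_top n \<noteq> sig_left n" "sig_top n \<noteq> sig_right n" "sig_left n \<noteq> sig_right n"
      by (metis same_comp_refl)+
    then have "2 + 1 = card {sig_top n, sig_left n, sig_right n}" by simp
    also have "\<dots> \<le> ncomp (sig_verts n) A"
      using sep outmost by (intro card_le) (auto dest: same_comp_sym)
    finally show "(X - 1)\<^sup>2 dvd weight (sig_verts n) (sig_edges n) A"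
      by (rule dvd_weight)
  qed
qed

end
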